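(* Let $N\ge1$, $p\ge2$, $w,g\in L^1_{loc}(\mathbb{R}^N)$ positive a.e. with $g^{-1}\in L^\infty(\mathbb{R}^N)$. Let $M$ be a constant with $M>0$ if $p=2$ and $0<M<\frac{4}{(p-1)^2}$ if $p>2$. Assume there exist constants $\mu>0$ and $C>0$ such that $\mu<pT_p$ and $\int_{B_{2R}(0)}w^{T_p}dx\le CR^{\mu}$ for all $R\ge1$. Then there is no $u\in C^1(\mathbb{R}^N)$ with $u>0$ and $\|u\|_{L^\infty(\mathbb{R}^N)}\le M$ which is a stable weak solution of $\operatorname{div}(w|\nabla u|^{p-2}\nabla u)=g(x)e^{1/u}$ in $\mathbb{R}^N$.
   Context: Weak solution and stability are with respect to $f(t)=-e^{1/t}$ and the equation $-\operatorname{div}(w|\nabla u|^{p-2}\nabla u)=gf(u)$: $u\in C^1$ is a weak solution if $\int w|\nabla u|^{p-2}\nabla u\cdot\nabla\varphi=\int gf(u)\varphi$ for all $\varphi\in C^1_c(\mathbb{R}^N)$; it is stable if for all $\varphi\in C^1_c(\mathbb{R}^N)$, $\int w|\nabla u|^{p-2}|\nabla\varphi|^2+(p-2)\int w|\nabla u|^{p-4}(\nabla u\cdot\nabla\varphi)^2-\int gf'(u)\varphi^2\ge0$ (middle integrand $=0$ where $\nabla u=0$). $t_p=\frac1M+\sqrt{\frac1M+\frac1{M^2}}$ if $p=2$, and $t_p=\frac{2}{M(p-1)}-\frac{p-1}{2}$ if $p>2$; $T_p=1+\frac{2t_p}{p}$. $B_r(0)$ is the open ball of radius $r$ centered at the origin.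 *)

theory Defs
  imports "HOL-Analysis.Analysis"
begin

definition grad :: "('a::euclidean_space \<Rightarrow> real) \<Rightarrow> 'a \<Rightarrow> 'a" where
  "grad u x = (SOME D. GDERIV u x :> D)"

definition C1_fun :: "('a::euclidean_space \<Rightarrow> real) \<Rightarrow> bool" where
  "C1_fun u \<longleftrightarrow> (\<forall>x. u differentiable (at x)) \<and> continuous_on UNIV (grad u)"

definition C1c_fun :: "('a::euclidean_space \<Rightarrow> real) \<Rightarrow> bool" where
  "C1c_fun \<phi> \<longleftrightarrow> C1_fun \<phi> \<and> compact (closure {x. \<phi> x \<noteq> 0})"

definition L1_loc :: "('a::euclidean_space \<Rightarrow> real) \<Rightarrow> bool" where
  "L1_loc w \<longleftrightarrow> (\<forall>K. compact K \<longrightarrow> set_integrable lebesgue K w)"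

definition Linf :: "('a::euclidean_space \<Rightarrow> real) \<Rightarrow> bool" where
  "Linf h \<longleftrightarrow> h \<in> borel_measurable lebesgue \<and> (\<exists>B. AE x in lebesgue. \<bar>h x\<bar> \<le> B)"

(* real power t^a for t \<ge> 0 with the convention t^0 = 1 (also for t = 0) *)
definition rpow :: "real \<Rightarrow> real \<Rightarrow> real" where
  "rpow t a = (if a = 0 then 1 else t powr a)"

definition fnl :: "real \<Rightarrow> real" where
  "fnl t = - exp (1 / t)"

(* weak solution of -div(w |\<nabla>u|^{p-2} \<nabla>u) = g f(u) *)
definition weak_solution ::
  "real \<Rightarrow> ('a::euclidean_space \<Rightarrow> real) \<Rightarrow> ('a \<Rightarrow> real) \<Rightarrow> ('a \<Rightarrow> real) \<Rightarrow> bool" where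
  "weak_solution p w g u \<longleftrightarrow> C1_fun u \<and>
     (\<forall>\<phi>. C1c_fun \<phi> \<longrightarrow>
        (\<integral>x. w x * rpow (norm (grad u x)) (p - 2) * (grad u x \<bullet> grad \<phi> x) \<partial>lebesgue)
      = (\<integral>x. g x * fnl (u x) * \<phi> x \<partial>lebesgue))"

definition stable ::
  "real \<Rightarrow> ('a::euclidean_space \<Rightarrow> real) \<Rightarrow> ('a \<Rightarrow> real) \<Rightarrow> ('a \<Rightarrow> real) \<Rightarrow> bool" where
  "stable p w g u \<longleftrightarrow>
     (\<forall>\<phi>. C1c_fun \<phi> \<longrightarrow>
        (\<integral>x. w x * rpow (norm (grad u x)) (p - 2) * (norm (grad \<phi> x))\<^sup>2 \<partial>lebesgue)
      + (p - 2) * (\<integral>x. (if grad u x = 0 then 0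
                      else w x * norm (grad u x) powr (p - 4) * (grad u x \<bullet> grad \<phi> x)\<^sup>2) \<partial>lebesgue)
      - (\<integral>x. g x * deriv fnl (u x) * (\<phi> x)\<^sup>2 \<partial>lebesgue) \<ge> 0)"

definition t_p :: "real \<Rightarrow> real \<Rightarrow> real" where
  "t_p M p = (if p = 2 then 1 / M + sqrt (1 / M + 1 / M\<^sup>2)
              else 2 / (M * (p - 1)) - (p - 1) / 2)"

definition T_p :: "real \<Rightarrow> real \<Rightarrow> real" where
  "T_p M p = 1 + 2 * t_p M p / p"

end

theory Submission
  imports Defs
begin

text \<open>
  Since \<open>f(t) = -e\<^sup>1\<^sup>/\<^sup>t \<le> -1\<close> and \<open>g\<close> is bounded below,
  testing the equation with the cutoff \<open>\<zeta>\<^sub>R = (1 - |x|\<^sup>2/4R\<^sup>2)\<^sub>+\<^sup>k\<close> bounds \<open>|B\<^sub>R|\<close>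
  by \<open>\<integral> w |\<nabla>u|\<^sup>p\<^sup>-\<^sup>1 |\<nabla>\<zeta>\<^sub>R|\<close>. Testing with \<open>u \<zeta>\<^sub>R\<close> and Young's inequality bound the
  latter by \<open>R\<^sup>-\<^sup>p \<integral>\<^sub>B\<^sub>2\<^sub>R w\<close>, so the mean of \<open>w\<close> over \<open>B\<^sub>2\<^sub>R\<close> grows like \<open>R\<^sup>p\<close>.
  Splitting \<open>w \<le> l + l\<^sup>1\<^sup>-\<^sup>T w\<^sup>T\<close> with \<open>T = T\<^sub>p > 1\<close>, the growth hypothesis turns this into
  \<open>c R\<^sup>p \<le> l + l\<^sup>1\<^sup>-\<^sup>T A R\<^sup>\<mu>\<close> for all \<open>l > 0\<close>, impossible for large \<open>R\<close> as \<open>\<mu> < p T\<close>.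
\<close>

lemma gderiv_unique:
  fixes f :: "'a::euclidean_space \<Rightarrow> real"
  assumes "GDERIV f x :> D" "GDERIV f x :> D'"
  shows "D = D'"
proof -
  have "(\<lambda>h. h \<bullet> D) = (\<lambda>h. h \<bullet> D')"
    using assms unfolding gderiv_def by (rule has_derivative_unique)
  then have "(D - D') \<bullet> D = (D - D') \<bullet> D'" by metis
  then have "(D - D') \<bullet> (D - D') = 0" by (simp add: inner_diff_right)
  then show ?thesis by simp
qed

lemma grad_eqI:
  fixes f :: "'a::euclidean_space \<Rightarrow> real"
  assumes "GDERIV f x :> D"
  shows "grad f x = D"
  unfolding grad_def using assms by (metis (mono_tags) gderiv_unique someI_ex)

lemma gderiv_grad:
  fixes f :: "'a::euclidean_space \<Rightarrow> real"
  assumes "f differentiable (at x)"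
  shows "GDERIV f x :> grad f x"
proof -
  obtain f' where f': "(f has_derivative f') (at x)"
    using assms by (auto simp: differentiable_def)
  define D where "D = (\<Sum>b\<in>Basis. f' b *\<^sub>R b)"
  have "f' h = h \<bullet> D" for h
  proof -
    have "f' h = f' (\<Sum>b\<in>Basis. (h \<bullet> b) *\<^sub>R b)" by (simp add: euclidean_representation)
    also have "\<dots> = (\<Sum>b\<in>Basis. (h \<bullet> b) * f' b)"
      using has_derivative_linear[OF f'] by (simp add: linear_sum linear_scale)
    also have "\<dots> = h \<bullet> D" unfolding D_def by (simp add: inner_sum_right mult.commute)
    finally show ?thesis .
  qed
  then have "f' = (\<lambda>h. h \<bullet> D)" by auto
  then have "GDERIV f x :> D" using f' by (simp add: gderiv_def)
  then show ?thesis using grad_eqI by metis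
qed

lemma C1_funI:
  fixes f :: "'a::euclidean_space \<Rightarrow> real"
  assumes "\<And>x. GDERIV f x :> D x" "continuous_on UNIV D"
  shows "C1_fun f"
  using assms grad_eqI[OF assms(1)] unfolding C1_fun_def gderiv_def differentiable_def
  by (metis (no_types, lifting) ext)

lemma C1_fun_continuous: "C1_fun u \<Longrightarrow> continuous_on UNIV u"
  unfolding C1_fun_def
  by (meson continuous_at_imp_continuous_on differentiable_imp_continuous_within)

lemma C1_fun_gderiv: "C1_fun u \<Longrightarrow> GDERIV u x :> grad u x"
  unfolding C1_fun_def by (simp add: gderiv_grad)

lemma
  fixes u v :: "'a::euclidean_space \<Rightarrow> real"
  assumes "C1_fun u" "C1_fun v"
  shows C1_fun_mult: "C1_fun (\<lambda>x. u x * v x)"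
    and grad_mult: "grad (\<lambda>x. u x * v x) x = u x *\<^sub>R grad v x + v x *\<^sub>R grad u x"
proof -
  have d: "GDERIV (\<lambda>x. u x * v x) x :> u x *\<^sub>R grad v x + v x *\<^sub>R grad u x" for x
    using GDERIV_mult[OF C1_fun_gderiv[OF assms(1)] C1_fun_gderiv[OF assms(2)]] .
  show "C1_fun (\<lambda>x. u x * v x)"
    using assms by (intro C1_funI[OF d] continuous_intros C1_fun_continuous)
      (auto simp: C1_fun_def)
  show "grad (\<lambda>x. u x * v x) x = u x *\<^sub>R grad v x + v x *\<^sub>R grad u x"
    using d by (rule grad_eqI)
qed

lemma C1c_funI:
  fixes \<phi> :: "'a::euclidean_space \<Rightarrow> real"
  assumes "C1_fun \<phi>" "\<And>x. r \<le> norm x \<Longrightarrow> \<phi> x = 0"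
  shows "C1c_fun \<phi>"
proof -
  have "{x. \<phi> x \<noteq> 0} \<subseteq> cball 0 r" using assms(2) by (force simp: not_le)
  then have "bounded (closure {x. \<phi> x \<noteq> 0})"
    by (meson bounded_cball bounded_closure bounded_subset)
  then show ?thesis using assms(1) by (simp add: C1c_fun_def compact_eq_bounded_closed)
qed

text \<open>Outside the support the gradient vanishes too, since \<open>\<phi>\<close> is locally constant there.\<close>

lemma C1c_fun_vanishing:
  fixes \<phi> :: "'a::euclidean_space \<Rightarrow> real"
  assumes "C1c_fun \<phi>"
  obtains r where "\<And>x. r \<le> norm x \<Longrightarrow> \<phi> x = 0 \<and> grad \<phi> x = 0"
proof -
  obtain r0 where r0: "\<forall>x \<in> closure {x. \<phi> x \<noteq> 0}. norm x \<le> r0"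
    using assms unfolding C1c_fun_def by (meson bounded_iff compact_imp_bounded)
  have zero: "\<phi> y = 0" if "r0 < norm y" for y
    using r0 closure_subset[of "{x. \<phi> x \<noteq> 0}"] that by force
  have "\<phi> x = 0 \<and> grad \<phi> x = 0" if "r0 + 1 \<le> norm x" for x
  proof
    show "\<phi> x = 0" using that zero by simp
    have "\<phi> y = 0" if "y \<in> ball x 1" for y
      using that \<open>r0 + 1 \<le> norm x\<close> zero norm_triangle_ineq2[of x y]
      by (simp add: dist_norm norm_minus_commute)
    then have "GDERIV \<phi> x :> 0"
      unfolding gderiv_def inner_zero_right
      by (intro has_derivative_transform_within_open[OF has_derivative_const[of 0] open_ball[of x 1]]) simp_all
    then show "grad \<phi> x = 0" by (rule grad_eqI)
  qed
  then show ?thesis using that by blast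
qed

lemma C1c_fun_mult:
  fixes u \<phi> :: "'a::euclidean_space \<Rightarrow> real"
  assumes "C1_fun u" "C1c_fun \<phi>"
  shows "C1c_fun (\<lambda>x. u x * \<phi> x)"
proof -
  obtain r where "\<And>x. r \<le> norm x \<Longrightarrow> \<phi> x = 0 \<and> grad \<phi> x = 0"
    using C1c_fun_vanishing[OF assms(2)] by blast
  then show ?thesis
    using assms by (intro C1c_funI[where r = r] C1_fun_mult) (auto simp: C1c_fun_def)
qed

lemma L1_loc_one: "L1_loc (\<lambda>x::'a::euclidean_space. 1::real)"
  unfolding L1_loc_def set_integrable_def
proof (intro allI impI)
  fix K :: "'a set"
  assume "compact K"
  then have "integrable lebesgue (indicator K :: 'a \<Rightarrow> real)"
    using emeasure_compact_finite[of K]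
    by (intro integrable_real_indicator) (auto simp: compact_imp_closed)
  then show "integrable lebesgue (\<lambda>x. indicator K x *\<^sub>R (1::real))" by simp
qed

lemma L1_loc_integrable_mult:
  fixes w h :: "'a::euclidean_space \<Rightarrow> real"
  assumes w: "L1_loc w" and h: "continuous_on UNIV h" and h0: "\<And>x. r \<le> norm x \<Longrightarrow> h x = 0"
  shows "integrable lebesgue (\<lambda>x. w x * h x)"
proof -
  define K where "K = cball (0::'a) r"
  have "set_integrable lebesgue K w" using w by (simp add: L1_loc_def K_def)
  then have iw: "integrable lebesgue (\<lambda>x. indicator K x *\<^sub>R w x)" by (simp add: set_integrable_def)
  have "bounded (h ` K)"
    unfolding K_def using h
    by (meson compact_cball compact_continuous_image compact_imp_bounded continuous_on_subset subset_UNIV)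
  then obtain B where B: "\<And>x. x \<in> K \<Longrightarrow> \<bar>h x\<bar> \<le> B" by (auto simp: bounded_iff)
  have eq: "(\<lambda>x. w x * h x) = (\<lambda>x. indicator K x *\<^sub>R w x * h x)"
  proof
    fix x
    show "w x * h x = indicator K x *\<^sub>R w x * h x"
      using h0[of x] by (cases "x \<in> K") (auto simp: K_def)
  qed
  have bound: "AE x in lebesgue. norm (indicator K x *\<^sub>R w x * h x) \<le> norm (B * (indicator K x *\<^sub>R w x))"
  proof (rule AE_I2)
    fix x
    show "norm (indicator K x *\<^sub>R w x * h x) \<le> norm (B * (indicator K x *\<^sub>R w x))"
    proof (cases "x \<in> K")
      case True
      then have "\<bar>h x\<bar> \<le> B" by (rule B)
      then show ?thesis using True by (simp add: abs_mult mult.commute[of "\<bar>w x\<bar>"] mult_right_mono)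
    qed simp
  qed
  have "h \<in> borel_measurable lebesgue"
    using h by (simp add: borel_measurable_continuous_onI measurable_completion)
  then have "(\<lambda>x. indicator K x *\<^sub>R w x * h x) \<in> borel_measurable lebesgue"
    using borel_measurable_integrable[OF iw] by measurable
  then show ?thesis
    unfolding eq using Bochner_Integration.integrable_bound[OF integrable_mult_right[OF iw] _ bound] by blast
qed

lemma L1_loc_integrable_indicator_ball:
  fixes w :: "'a::euclidean_space \<Rightarrow> real"
  assumes "L1_loc w"
  shows "integrable lebesgue (\<lambda>x. w x * indicator (ball 0 r) x)"
proof -
  have "set_integrable lebesgue (cball 0 r) w" using assms by (simp add: L1_loc_def)
  then have "set_integrable lebesgue (ball 0 r) w" by (rule set_integrable_subset) auto
  then show ?thesis by (simp add: set_integrable_def mult.commute)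
qed

lemma max0_power_has_real_derivative:
  assumes k: "2 \<le> k"
  shows "((\<lambda>t. (max 0 t) ^ k) has_real_derivative real k * (max 0 t) ^ (k - 1)) (at t)"
proof -
  consider "0 < t" | "t < 0" | "t = 0" by linarith
  then show ?thesis
  proof cases
    case 1
    have "((\<lambda>t. t ^ k) has_real_derivative real k * (max 0 t) ^ (k - 1)) (at t)"
      using 1 by (auto intro!: derivative_eq_intros)
    then show ?thesis
      by (rule has_field_derivative_transform_within_open[where S = "{0<..}"]) (use 1 in auto)
  next
    case 2
    have "((\<lambda>t. 0) has_real_derivative real k * (max 0 t) ^ (k - 1)) (at t)"
      using 2 k by (auto intro!: derivative_eq_intros)
    then show ?thesis
      by (rule has_field_derivative_transform_within_open[where S = "{..<0}"]) (use 2 k in auto)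
  next
    case 3
    have "((\<lambda>h::real. (max 0 h) ^ k / h) \<longlongrightarrow> 0) (at 0)"
    proof (rule Lim_null_comparison)
      show "\<forall>\<^sub>F h in at 0. norm ((max 0 h) ^ k / h) \<le> \<bar>h\<bar> ^ (k - 1)"
      proof (rule always_eventually, rule allI)
        fix h :: real
        obtain j where j: "k = Suc j" using k by (cases k) auto
        have "norm ((max 0 h) ^ k / h) \<le> \<bar>h\<bar> ^ k / \<bar>h\<bar>"
          by (simp add: abs_div) (intro divide_right_mono power_mono, auto)
        also have "\<dots> \<le> \<bar>h\<bar> ^ (k - 1)" by (cases "h = 0") (auto simp: j)
        finally show "norm ((max 0 h) ^ k / h) \<le> \<bar>h\<bar> ^ (k - 1)" .
      qed
      show "((\<lambda>h. \<bar>h\<bar> ^ (k - 1)) \<longlongrightarrow> 0) (at (0::real))"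
        using k by (auto intro!: tendsto_eq_intros)
    qed
    then show ?thesis using 3 k by (simp add: DERIV_def power_0_left)
  qed
qed

definition cutoff_base :: "real \<Rightarrow> 'a::euclidean_space \<Rightarrow> real" where
  "cutoff_base R x = max 0 (1 - (x \<bullet> x) / (4 * R\<^sup>2))"

definition cutoff :: "nat \<Rightarrow> real \<Rightarrow> 'a::euclidean_space \<Rightarrow> real" where
  "cutoff k R x = cutoff_base R x ^ k"

definition cutoff_grad :: "nat \<Rightarrow> real \<Rightarrow> 'a::euclidean_space \<Rightarrow> 'a" where
  "cutoff_grad k R x = (- real k * cutoff_base R x ^ (k - 1) / (2 * R\<^sup>2)) *\<^sub>R x"

lemma cutoff_base_nonneg: "0 \<le> cutoff_base R x"
  and cutoff_base_le_1: "cutoff_base R x \<le> 1"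
  and cutoff_nonneg: "0 \<le> cutoff k R x"
  by (auto simp: cutoff_base_def cutoff_def)

lemma has_gderiv_cutoff:
  assumes "2 \<le> k" "0 < R"
  shows "GDERIV (cutoff k R) x :> cutoff_grad k R x"
proof -
  have "GDERIV (\<lambda>x. 1 - (x \<bullet> x) / (4 * R\<^sup>2)) x :> - (1 / (2 * R\<^sup>2)) *\<^sub>R x"
    unfolding gderiv_def using assms(2)
    by (auto intro!: derivative_eq_intros simp: fun_eq_iff inner_commute field_simps power2_eq_square)
  from GDERIV_DERIV_compose[OF this max0_power_has_real_derivative[OF assms(1)]]
  show ?thesis
    by (simp add: cutoff_def[abs_def] cutoff_grad_def cutoff_base_def[abs_def])
qed

lemma continuous_on_cutoff_grad: "continuous_on UNIV (cutoff_grad k R)"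
  unfolding cutoff_grad_def cutoff_base_def divide_inverse by (intro continuous_intros)

lemma cutoff_base_eq_0:
  assumes "0 < R" "2 * R \<le> norm x"
  shows "cutoff_base R x = 0"
proof -
  have "(2 * R)\<^sup>2 \<le> (norm x)\<^sup>2" using assms by (intro power_mono) auto
  then have "4 * R\<^sup>2 \<le> x \<bullet> x" by (simp add: power2_norm_eq_inner power_mult_distrib)
  then show ?thesis using assms by (simp add: cutoff_base_def field_simps)
qed

lemma
  assumes "2 \<le> k" "0 < R" "2 * R \<le> norm x"
  shows cutoff_eq_0: "cutoff k R x = 0"
    and cutoff_grad_eq_0: "cutoff_grad k R x = 0"
  using assms cutoff_base_eq_0[OF assms(2,3)] by (auto simp: cutoff_def cutoff_grad_def)

lemma
  assumes "2 \<le> k" "0 < R"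
  shows C1c_fun_cutoff: "C1c_fun (cutoff k R)"
    and grad_cutoff: "grad (cutoff k R) = cutoff_grad k R"
proof -
  show "grad (cutoff k R) = cutoff_grad k R"
    using grad_eqI[OF has_gderiv_cutoff[OF assms]] by blast
  show "C1c_fun (cutoff k R)"
    using assms cutoff_eq_0
    by (intro C1c_funI C1_funI[OF has_gderiv_cutoff[OF assms] continuous_on_cutoff_grad]) blast+
qed

lemma integrable_cutoff:
  assumes "2 \<le> k" "0 < R"
  shows "integrable lebesgue (cutoff k R :: 'a::euclidean_space \<Rightarrow> real)"
proof -
  have cont: "continuous_on UNIV (cutoff k R :: 'a \<Rightarrow> real)"
    using C1_fun_continuous C1c_fun_cutoff[OF assms] unfolding C1c_fun_def by blast
  show ?thesis
    using L1_loc_integrable_mult[OF L1_loc_one cont, where r = "2 * R"] cutoff_eq_0[OF assms] by auto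
qed

lemma cutoff_ge:
  assumes "0 < R" "norm x \<le> R"
  shows "(3 / 4) ^ k \<le> cutoff k R x"
proof -
  have "(norm x)\<^sup>2 \<le> R\<^sup>2" using assms by (intro power_mono) auto
  then have "(x \<bullet> x) / (4 * R\<^sup>2) \<le> 1 / 4"
    using assms by (simp add: power2_norm_eq_inner field_simps)
  then show ?thesis unfolding cutoff_def cutoff_base_def by (intro power_mono) auto
qed

lemma norm_cutoff_grad_le:
  assumes "2 \<le> k" "0 < R"
  shows "norm (cutoff_grad k R x) \<le> real k / R * cutoff_base R x ^ (k - 1)"
proof (cases "norm x < 2 * R")
  case True
  have "norm (cutoff_grad k R x) = real k * cutoff_base R x ^ (k - 1) / (2 * R\<^sup>2) * norm x"
    by (simp add: cutoff_grad_def abs_mult cutoff_base_nonneg)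
  also have "\<dots> \<le> real k * cutoff_base R x ^ (k - 1) / (2 * R\<^sup>2) * (2 * R)"
    using True by (intro mult_left_mono) (auto simp: cutoff_base_nonneg)
  also have "\<dots> = real k / R * cutoff_base R x ^ (k - 1)"
    using assms by (simp add: field_simps power2_eq_square)
  finally show ?thesis .
next
  case False
  then have "cutoff_grad k R x = 0" by (intro cutoff_grad_eq_0[OF assms]) simp
  then show ?thesis using assms(2) by (simp add: cutoff_base_nonneg)
qed

lemma mult_powr_le_young:
  fixes X Y e p :: real
  assumes X: "0 \<le> X" and Y: "0 \<le> Y" and e: "0 < e" and p: "1 \<le> p"
  shows "X powr (p - 1) * Y \<le> e * X powr p + e powr (1 - p) * Y powr p"
proof (cases "Y \<le> e * X")
  case True
  have "X powr (p - 1) * Y \<le> X powr (p - 1) * (e * X)"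
    using True by (intro mult_left_mono) auto
  also have "\<dots> = e * X powr p"
    using X by (cases "X = 0") (auto simp: powr_diff)
  finally show ?thesis by (simp add: add_increasing2)
next
  case False
  then have Y0: "0 < Y" using mult_nonneg_nonneg[of e X] X e by linarith
  have "X powr (p - 1) \<le> (Y / e) powr (p - 1)"
    using False X e p by (intro powr_mono2) (auto simp: field_simps)
  also have "\<dots> = Y powr (p - 1) * e powr (1 - p)"
    using powr_minus[of e "p - 1"] powr_divide[of Y e "p - 1"] Y e by (simp add: divide_inverse)
  finally have "X powr (p - 1) * Y \<le> Y powr (p - 1) * e powr (1 - p) * Y"
    using Y0 by (intro mult_right_mono) auto
  also have "\<dots> = e powr (1 - p) * Y powr p"
    using Y0 by (simp add: powr_diff algebra_simps)
  finally show ?thesis using e by (simp add: add_increasing)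
qed

lemma le_add_powr_threshold:
  fixes w l T :: real
  assumes "0 \<le> w" "0 < l" "1 \<le> T"
  shows "w \<le> l + l powr (1 - T) * w powr T"
proof (cases "w \<le> l")
  case False
  have "w = l powr (1 - T) * (w * l powr (T - 1))"
    using assms by (simp add: powr_add[symmetric])
  also have "\<dots> \<le> l powr (1 - T) * (w * w powr (T - 1))"
    using False assms by (intro mult_left_mono powr_mono2) auto
  also have "w * w powr (T - 1) = w powr T"
    using False assms by (simp add: powr_diff)
  finally show ?thesis using assms by simp
qed (simp add: add_increasing2)

text \<open>
  The exponent \<open>k \<ge> p\<close> lets the factor \<open>s\<^sup>k\<^sup>-\<^sup>1\<close> of the cutoff gradient be absorbed
  into \<open>(s\<^sup>k\<^sup>/\<^sup>p)\<^sup>p\<^sup>-\<^sup>1\<close>.\<close>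

lemma powr_mult_cutoff_le_young:
  fixes a s z K M p :: real and k :: nat
  assumes a: "0 \<le> a" and s: "0 \<le> s" "s \<le> 1" and k: "2 \<le> k" "p \<le> real k" and p: "1 \<le> p"
    and z: "0 \<le> z" "z \<le> K * s ^ (k - 1)" and K: "0 \<le> K" and M: "0 < M"
  shows "a powr (p - 1) * z \<le> 1 / (2 * M) * (a powr p * s ^ k) + (2 * M) powr (p - 1) * K powr p"
proof (cases "s = 0")
  case True
  then have "z = 0" using z k by (simp add: power_0_left)
  then show ?thesis using True k M by (simp add: power_0_left)
next
  case False
  define X where "X = a * s powr (real k / p)"
  have "s ^ (k - 1) = s powr real (k - 1)" using False s by (simp add: powr_realpow)
  also have "\<dots> = s powr (real k - 1)" using k by (simp add: of_nat_diff)
  also have "\<dots> \<le> s powr (real k / p * (p - 1))"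
  proof (rule powr_mono')
    have "real k / p * (p - 1) = real k - real k / p" using p by (simp add: field_simps)
    moreover have "1 \<le> real k / p" using k p by simp
    ultimately show "real k / p * (p - 1) \<le> real k - 1" by linarith
  qed (use s in auto)
  also have "\<dots> = (s powr (real k / p)) powr (p - 1)" by (simp add: powr_powr)
  finally have sk: "s ^ (k - 1) \<le> (s powr (real k / p)) powr (p - 1)" .
  have "z \<le> K * (s powr (real k / p)) powr (p - 1)"
    using z(2) mult_left_mono[OF sk K] by (rule order.trans)
  then have "a powr (p - 1) * z \<le> a powr (p - 1) * (K * (s powr (real k / p)) powr (p - 1))"
    by (intro mult_left_mono) auto
  also have "\<dots> = X powr (p - 1) * K"
    using a s by (simp add: X_def powr_mult)
  also have "\<dots> \<le> 1 / (2 * M) * X powr p + (1 / (2 * M)) powr (1 - p) * K powr p"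
    using a s K M p by (intro mult_powr_le_young) (auto simp: X_def)
  also have "X powr p = a powr p * s ^ k"
  proof -
    have "X powr p = a powr p * s powr (real k / p * p)" using a s by (simp add: X_def powr_mult powr_powr)
    also have "real k / p * p = real k" using p by simp
    also have "s powr real k = s ^ k" using False s by (simp add: powr_realpow)
    finally show ?thesis .
  qed
  also have "(1 / (2 * M)) powr (1 - p) = (2 * M) powr (p - 1)"
  proof -
    have "(1 / (2 * M)) powr (1 - p) = 1 / (2 * M) powr (1 - p)" using M by (simp add: powr_divide)
    also have "\<dots> = (2 * M) powr (- (1 - p))" by (rule powr_minus_divide[symmetric])
    finally show ?thesis by simp
  qed
  finally show ?thesis .
qed

lemma rpow_nonneg: "0 \<le> rpow a q"
  by (simp add: rpow_def)

lemma rpow_mult_powr: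
  fixes a p q :: real
  assumes "0 \<le> a" "2 \<le> p" "0 < q"
  shows "rpow a (p - 2) * a powr q = a powr (p - 2 + q)"
  using assms by (cases "a = 0") (simp_all add: rpow_def powr_add)

lemma
  fixes a p :: real
  assumes "0 \<le> a" "2 \<le> p"
  shows rpow_mult_square: "rpow a (p - 2) * a\<^sup>2 = a powr p"
    and rpow_mult_self: "rpow a (p - 2) * a = a powr (p - 1)"
  using rpow_mult_powr[OF assms, of 2] rpow_mult_powr[OF assms, of 1] assms
  by (simp_all add: powr_numeral)

lemma continuous_on_rpow_norm_grad:
  assumes "C1_fun u" "2 \<le> p"
  shows "continuous_on UNIV (\<lambda>x. rpow (norm (grad u x)) (p - 2))"
proof (cases "p = 2")
  case False
  then have "continuous_on UNIV (\<lambda>x. norm (grad u x) powr (p - 2))"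
    using assms by (intro continuous_on_powr' continuous_intros) (auto simp: C1_fun_def)
  then show ?thesis using False by (simp add: rpow_def)
qed (simp add: rpow_def)

lemma continuous_on_fnl_comp:
  assumes "C1_fun u" "\<And>x. 0 < u x"
  shows "continuous_on UNIV (\<lambda>x. fnl (u x))"
  unfolding fnl_def using assms
  by (intro continuous_intros C1_fun_continuous) (auto simp: less_imp_neq[symmetric])

lemma weak_solution_test_mass_le:
  fixes w g u \<phi> :: "'a::euclidean_space \<Rightarrow> real"
  assumes weak: "weak_solution p w g u" and Lg: "L1_loc g"
    and g: "AE x in lebesgue. 1 / B \<le> g x" and B: "0 < B" and u: "\<And>x. 0 < u x"
    and \<phi>: "C1c_fun \<phi>" "\<And>x. 0 \<le> \<phi> x"
  shows "(\<integral>x. \<phi> x \<partial>lebesgue)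
    \<le> B * (\<integral>x. \<bar>w x * rpow (norm (grad u x)) (p - 2) * (grad u x \<bullet> grad \<phi> x)\<bar> \<partial>lebesgue)"
proof -
  obtain r where r: "\<And>x. r \<le> norm x \<Longrightarrow> \<phi> x = 0 \<and> grad \<phi> x = 0"
    using C1c_fun_vanishing[OF \<phi>(1)] by blast
  have uC1: "C1_fun u" using weak by (simp add: weak_solution_def)
  have c\<phi>: "continuous_on UNIV \<phi>" using \<phi>(1) by (simp add: C1c_fun_def C1_fun_continuous)
  have i\<phi>: "integrable lebesgue \<phi>"
    using L1_loc_integrable_mult[OF L1_loc_one c\<phi>, where r = r] r by simp
  have iG: "integrable lebesgue (\<lambda>x. g x * fnl (u x) * \<phi> x)"
    using L1_loc_integrable_mult[OF Lg, of "\<lambda>x. fnl (u x) * \<phi> x" r] r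
    by (simp add: mult.assoc continuous_intros continuous_on_fnl_comp[OF uC1 u] c\<phi>)
  have "AE x in lebesgue. (1 / B) * \<phi> x \<le> - (g x * fnl (u x) * \<phi> x)"
    using g
  proof eventually_elim
    case (elim x)
    have "1 \<le> exp (1 / u x)" using u[of x] by simp
    moreover have "0 \<le> g x" using elim B less_le_trans[of 0 "1 / B" "g x"] by simp
    ultimately have "g x * 1 \<le> g x * exp (1 / u x)" by (rule mult_left_mono)
    then have "1 / B \<le> g x * exp (1 / u x)" using elim by linarith
    then have "1 / B * \<phi> x \<le> g x * exp (1 / u x) * \<phi> x" by (rule mult_right_mono[OF _ \<phi>(2)])
    then show ?case by (simp add: fnl_def)
  qed
  then have "(\<integral>x. (1 / B) * \<phi> x \<partial>lebesgue) \<le> (\<integral>x. - (g x * fnl (u x) * \<phi> x) \<partial>lebesgue)"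
    using i\<phi> iG by (intro integral_mono_AE) auto
  also have "\<dots> = - (\<integral>x. g x * fnl (u x) * \<phi> x \<partial>lebesgue)" by simp
  also have "\<dots> = - (\<integral>x. w x * rpow (norm (grad u x)) (p - 2) * (grad u x \<bullet> grad \<phi> x) \<partial>lebesgue)"
    using weak \<phi>(1) by (simp add: weak_solution_def)
  also have "\<dots> \<le> (\<integral>x. \<bar>w x * rpow (norm (grad u x)) (p - 2) * (grad u x \<bullet> grad \<phi> x)\<bar> \<partial>lebesgue)"
    by (rule abs_le_D2[OF integral_abs_bound])
  finally show ?thesis using B by (simp add: field_simps)
qed

text \<open>Testing the equation with \<open>u \<phi>\<close>; its right-hand side \<open>g f(u) u \<phi>\<close> is nonpositive.\<close>

lemma weak_solution_energy_le:
  fixes w g u \<phi> :: "'a::euclidean_space \<Rightarrow> real"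
  assumes weak: "weak_solution p w g u" and p: "2 \<le> p" and Lw: "L1_loc w" and Lg: "L1_loc g"
    and g: "AE x in lebesgue. 0 \<le> g x" and u: "\<And>x. 0 < u x" "\<And>x. u x \<le> M"
    and \<phi>: "C1c_fun \<phi>" "\<And>x. 0 \<le> \<phi> x"
  shows "(\<integral>x. w x * (norm (grad u x) powr p * \<phi> x) \<partial>lebesgue)
    \<le> M * (\<integral>x. \<bar>w x * rpow (norm (grad u x)) (p - 2) * (grad u x \<bullet> grad \<phi> x)\<bar> \<partial>lebesgue)"
proof -
  define rp where "rp x = rpow (norm (grad u x)) (p - 2)" for x
  define F where "F x = w x * rp x * (grad u x \<bullet> grad \<phi> x)" for x
  define F' where "F' x = w x * rp x * (grad u x \<bullet> grad (\<lambda>x. u x * \<phi> x) x)" for x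
  define G' where "G' x = g x * fnl (u x) * (u x * \<phi> x)" for x
  define E where "E x = w x * (norm (grad u x) powr p * \<phi> x)" for x
  obtain r where r: "\<And>x. r \<le> norm x \<Longrightarrow> \<phi> x = 0 \<and> grad \<phi> x = 0"
    using C1c_fun_vanishing[OF \<phi>(1)] by blast
  have uC1: "C1_fun u" using weak by (simp add: weak_solution_def)
  have \<phi>C1: "C1_fun \<phi>" using \<phi>(1) by (simp add: C1c_fun_def)
  have grad_u\<phi>: "grad (\<lambda>x. u x * \<phi> x) x = u x *\<^sub>R grad \<phi> x + \<phi> x *\<^sub>R grad u x" for x
    using grad_mult[OF uC1 \<phi>C1] .
  have cont: "continuous_on UNIV u" "continuous_on UNIV \<phi>" "continuous_on UNIV (grad u)"
    "continuous_on UNIV (grad \<phi>)" "continuous_on UNIV rp" "continuous_on UNIV (\<lambda>x. fnl (u x))"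
    using uC1 \<phi>C1 continuous_on_rpow_norm_grad[OF uC1 p] continuous_on_fnl_comp[OF uC1 u(1)]
    by (auto simp: C1_fun_continuous C1_fun_def rp_def[abs_def])
  have "integrable lebesgue F" "integrable lebesgue F'" "integrable lebesgue G'" "integrable lebesgue E"
    unfolding F_def F'_def G'_def E_def grad_u\<phi> mult.assoc using p r
    by (auto intro!: L1_loc_integrable_mult[OF Lw, where r = r] L1_loc_integrable_mult[OF Lg, where r = r]
      continuous_intros continuous_on_powr' cont)
  note integrable = this integrable_abs[OF this(1)]
  have "E x \<le> F' x + M * \<bar>F x\<bar>" for x
  proof -
    have "F' x = u x * F x + E x"
      using rpow_mult_square[OF norm_ge_zero p, of "grad u x"]
      unfolding F'_def F_def E_def grad_u\<phi> rp_def
      by (simp add: inner_add_right power2_norm_eq_inner algebra_simps)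
    moreover have "- (u x * F x) \<le> u x * \<bar>F x\<bar>"
      using u(1)[of x] abs_ge_minus_self[of "u x * F x"] by (simp add: abs_mult)
    moreover have "u x * \<bar>F x\<bar> \<le> M * \<bar>F x\<bar>" by (rule mult_right_mono[OF u(2)]) simp
    ultimately show ?thesis by simp
  qed
  then have "(\<integral>x. E x \<partial>lebesgue) \<le> (\<integral>x. F' x + M * \<bar>F x\<bar> \<partial>lebesgue)"
    using integrable by (intro integral_mono) auto
  also have "\<dots> = (\<integral>x. F' x \<partial>lebesgue) + M * (\<integral>x. \<bar>F x\<bar> \<partial>lebesgue)"
    using integrable by simp
  also have "(\<integral>x. F' x \<partial>lebesgue) = (\<integral>x. G' x \<partial>lebesgue)"
    using weak C1c_fun_mult[OF uC1 \<phi>(1)] by (simp add: weak_solution_def F'_def G'_def rp_def)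
  also have "(\<integral>x. G' x \<partial>lebesgue) \<le> 0"
  proof -
    have "AE x in lebesgue. 0 \<le> - G' x"
      using g
    proof eventually_elim
      case (elim x)
      have "0 \<le> g x * exp (1 / u x) * (u x * \<phi> x)"
        using elim u(1)[of x] \<phi>(2)[of x] by (intro mult_nonneg_nonneg) auto
      then show ?case by (simp add: G'_def fnl_def)
    qed
    then have "0 \<le> (\<integral>x. - G' x \<partial>lebesgue)" by (rule integral_nonneg_AE)
    then show ?thesis by simp
  qed
  finally show ?thesis by (simp add: E_def F_def rp_def)
qed

lemma weak_solution_cutoff_flux_le:
  fixes w g u :: "'a::euclidean_space \<Rightarrow> real"
  assumes weak: "weak_solution p w g u" and p: "2 \<le> p" and k: "2 \<le> k" "p \<le> real k"
    and Lw: "L1_loc w" and w: "AE x in lebesgue. 0 \<le> w x"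
    and Lg: "L1_loc g" and g: "AE x in lebesgue. 0 \<le> g x"
    and u: "\<And>x. 0 < u x" "\<And>x. u x \<le> M" and R: "0 < R"
  shows "(\<integral>x. \<bar>w x * rpow (norm (grad u x)) (p - 2) * (grad u x \<bullet> cutoff_grad k R x)\<bar> \<partial>lebesgue)
    \<le> 2 * ((2 * M) powr (p - 1) * (real k / R) powr p)
        * (\<integral>x. w x * indicator (ball 0 (2 * R)) x \<partial>lebesgue)"
proof -
  define rp where "rp x = rpow (norm (grad u x)) (p - 2)" for x
  define F where "F x = w x * rp x * (grad u x \<bullet> cutoff_grad k R x)" for x
  define E where "E x = w x * (norm (grad u x) powr p * cutoff k R x)" for x
  define Kc where "Kc = (2 * M) powr (p - 1) * (real k / R) powr p"
  define J where "J = (\<integral>x. \<bar>F x\<bar> \<partial>lebesgue)"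
  define W where "W = (\<integral>x. w x * indicator (ball (0::'a) (2 * R)) x \<partial>lebesgue)"
  have M: "0 < M" using u[of 0] by linarith
  have uC1: "C1_fun u" using weak by (simp add: weak_solution_def)
  have cont: "continuous_on UNIV (grad u)" "continuous_on UNIV rp" "continuous_on UNIV (cutoff k R)"
    using uC1 continuous_on_rpow_norm_grad[OF uC1 p] C1c_fun_cutoff[OF k(1) R] C1_fun_continuous
    by (auto simp: C1_fun_def[of u] rp_def[abs_def] C1c_fun_def)
  have "integrable lebesgue (\<lambda>x. \<bar>F x\<bar>)" "integrable lebesgue E"
    unfolding F_def E_def mult.assoc using p
    by (auto intro!: integrable_abs L1_loc_integrable_mult[OF Lw, where r = "2 * R"]
      continuous_intros continuous_on_powr' cont continuous_on_cutoff_grad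
      simp: cutoff_eq_0[OF k(1) R] cutoff_grad_eq_0[OF k(1) R])
  note integrable = this L1_loc_integrable_indicator_ball[OF Lw, of "2 * R"]
  have energy: "(\<integral>x. E x \<partial>lebesgue) \<le> M * J"
    using weak_solution_energy_le[OF weak p Lw Lg g u C1c_fun_cutoff[OF k(1) R] cutoff_nonneg]
    by (simp add: E_def J_def F_def rp_def grad_cutoff[OF k(1) R])
  have "AE x in lebesgue. \<bar>F x\<bar> \<le> 1 / (2 * M) * E x + Kc * (w x * indicator (ball 0 (2 * R)) x)"
    using w
  proof eventually_elim
    case (elim x)
    have "0 \<le> E x" using elim by (simp add: E_def cutoff_nonneg)
    show ?case
    proof (cases "norm x < 2 * R")
      case True
      have "\<bar>F x\<bar> = w x * (rp x * \<bar>grad u x \<bullet> cutoff_grad k R x\<bar>)"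
        using elim by (simp add: F_def rp_def abs_mult rpow_nonneg)
      also have "\<dots> \<le> w x * (rp x * (norm (grad u x) * norm (cutoff_grad k R x)))"
        using elim by (intro mult_left_mono Cauchy_Schwarz_ineq2) (auto simp: rp_def rpow_nonneg)
      also have "\<dots> = w x * (norm (grad u x) powr (p - 1) * norm (cutoff_grad k R x))"
      proof -
        have "rp x * norm (grad u x) = norm (grad u x) powr (p - 1)"
          unfolding rp_def by (rule rpow_mult_self[OF norm_ge_zero p])
        then show ?thesis by (metis mult.assoc)
      qed
      also have "\<dots> \<le> w x * (1 / (2 * M) * (norm (grad u x) powr p * cutoff_base R x ^ k) + Kc)"
      proof (rule mult_left_mono[OF _ elim])
        show "norm (grad u x) powr (p - 1) * norm (cutoff_grad k R x)
            \<le> 1 / (2 * M) * (norm (grad u x) powr p * cutoff_base R x ^ k) + Kc"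
          unfolding Kc_def using k p R M
          by (intro powr_mult_cutoff_le_young norm_cutoff_grad_le[OF k(1) R])
            (auto simp: cutoff_base_nonneg cutoff_base_le_1)
      qed
      also have "\<dots> = 1 / (2 * M) * E x + Kc * (w x * indicator (ball 0 (2 * R)) x)"
        using True by (simp add: E_def cutoff_def algebra_simps)
      finally show ?thesis .
    next
      case False
      then have "cutoff_grad k R x = 0" by (intro cutoff_grad_eq_0[OF k(1) R]) simp
      then show ?thesis using \<open>0 \<le> E x\<close> elim M by (simp add: F_def Kc_def)
    qed
  qed
  then have "J \<le> (\<integral>x. 1 / (2 * M) * E x + Kc * (w x * indicator (ball 0 (2 * R)) x) \<partial>lebesgue)"
    using integrable unfolding J_def by (intro integral_mono_AE) auto
  also have "\<dots> = 1 / (2 * M) * (\<integral>x. E x \<partial>lebesgue) + Kc * W"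
    using integrable unfolding W_def by simp
  also have "1 / (2 * M) * (\<integral>x. E x \<partial>lebesgue) \<le> 1 / (2 * M) * (M * J)"
    using energy M by (intro mult_left_mono) auto
  finally have "J \<le> J / 2 + Kc * W" using M by simp
  then have "J \<le> 2 * Kc * W" by linarith
  then show ?thesis by (simp add: J_def F_def rp_def Kc_def W_def)
qed

lemma measure_ball_double:
  assumes "0 \<le> R"
  shows "measure lebesgue (ball (0::'a::euclidean_space) (2 * R)) = 2 ^ DIM('a) * measure lebesgue (ball (0::'a) R)"
  using assms content_ball[of R "0::'a"] content_ball[of "2 * R" "0::'a"] by (simp add: power_mult_distrib)

lemma weak_solution_weight_lower_bound:
  fixes w g u :: "'a::euclidean_space \<Rightarrow> real"
  assumes weak: "weak_solution p w g u" and p: "2 \<le> p"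
    and Lw: "L1_loc w" and w: "AE x in lebesgue. 0 \<le> w x"
    and Lg: "L1_loc g" and g: "AE x in lebesgue. 1 / B \<le> g x" and B: "0 < B"
    and u: "\<And>x. 0 < u x" "\<And>x. u x \<le> M"
  obtains c where "0 < c"
    and "\<And>R. 0 < R \<Longrightarrow> c * measure lebesgue (ball (0::'a) (2 * R)) * R powr p
            \<le> (\<integral>x. w x * indicator (ball 0 (2 * R)) x \<partial>lebesgue)"
proof
  define k where "k = nat \<lceil>p\<rceil> + 2"
  have k: "2 \<le> k" "p \<le> real k" by (auto simp: k_def) linarith
  have M: "0 < M" using u[of 0] by linarith
  define K where "K = 2 * B * ((2 * M) powr (p - 1) * real k powr p)"
  have K: "0 < K" using B M k by (simp add: K_def)
  define c where "c = (3 / 4) ^ k / (2 ^ DIM('a) * K)"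
  show "0 < c" using K by (simp add: c_def)
  fix R :: real
  assume R: "0 < R"
  have "0 \<le> 1 / B" using B by simp
  have g0: "AE x in lebesgue. 0 \<le> g x"
    using g by eventually_elim (rule order.trans[OF \<open>0 \<le> 1 / B\<close>])
  have "(3 / 4) ^ k * measure lebesgue (ball (0::'a) R) = (\<integral>x. (3 / 4) ^ k * indicator (ball (0::'a) R) x \<partial>lebesgue)"
    by simp
  also have "\<dots> \<le> (\<integral>x. cutoff k R (x::'a) \<partial>lebesgue)"
  proof (rule integral_mono)
    show "integrable lebesgue (\<lambda>x. (3 / 4) ^ k * indicator (ball (0::'a) R) x :: real)"
      using L1_loc_integrable_indicator_ball[OF L1_loc_one, of R] by simp
    show "integrable lebesgue (cutoff k R :: 'a \<Rightarrow> real)" using integrable_cutoff[OF k(1) R] .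
    show "(3 / 4) ^ k * indicator (ball (0::'a) R) x \<le> cutoff k R x" for x
      using cutoff_ge[OF R, of x k] cutoff_nonneg[of k R x] by (simp add: indicator_def)
  qed
  also have "\<dots> \<le> B * (\<integral>x. \<bar>w x * rpow (norm (grad u x)) (p - 2) * (grad u x \<bullet> cutoff_grad k R x)\<bar> \<partial>lebesgue)"
    using weak_solution_test_mass_le[OF weak Lg g B u(1) C1c_fun_cutoff[OF k(1) R] cutoff_nonneg]
    by (simp add: grad_cutoff[OF k(1) R])
  also have "\<dots> \<le> B * (2 * ((2 * M) powr (p - 1) * (real k / R) powr p)
      * (\<integral>x. w x * indicator (ball 0 (2 * R)) x \<partial>lebesgue))"
    using weak_solution_cutoff_flux_le[OF weak p k Lw w Lg g0 u R] B by simp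
  also have "\<dots> = K / R powr p * (\<integral>x. w x * indicator (ball 0 (2 * R)) x \<partial>lebesgue)"
    using R by (simp add: K_def powr_divide)
  finally have "(3 / 4) ^ k * measure lebesgue (ball (0::'a) R) * (R powr p / K)
      \<le> K / R powr p * (\<integral>x. w x * indicator (ball 0 (2 * R)) x \<partial>lebesgue) * (R powr p / K)"
    using K by (intro mult_right_mono) auto
  moreover have "c * measure lebesgue (ball (0::'a) (2 * R)) * R powr p
      = (3 / 4) ^ k * measure lebesgue (ball (0::'a) R) * (R powr p / K)"
    unfolding c_def measure_ball_double[OF less_imp_le[OF R]] using K by simp
  ultimately show "c * measure lebesgue (ball (0::'a) (2 * R)) * R powr p
      \<le> (\<integral>x. w x * indicator (ball 0 (2 * R)) x \<partial>lebesgue)"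
    using K R by simp
qed

lemma integral_indicator_ball_le_powr:
  fixes w :: "'a::euclidean_space \<Rightarrow> real"
  assumes Lw: "L1_loc w" and w: "AE x in lebesgue. 0 \<le> w x" and T: "1 \<le> T" and l: "0 < l" and A: "0 \<le> A"
    and growth: "set_nn_integral lebesgue (ball 0 r) (\<lambda>x. ennreal (w x powr T)) \<le> ennreal A"
  shows "(\<integral>x. w x * indicator (ball 0 r) x \<partial>lebesgue) \<le> l * measure lebesgue (ball (0::'a) r) + l powr (1 - T) * A"
proof -
  define wT where "wT x = (w x * indicator (ball (0::'a) r) x) powr T" for x
  have iw: "integrable lebesgue (\<lambda>x. w x * indicator (ball (0::'a) r) x)"
    using L1_loc_integrable_indicator_ball[OF Lw] .
  have i1: "integrable lebesgue (indicator (ball (0::'a) r) :: 'a \<Rightarrow> real)"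
    using L1_loc_integrable_indicator_ball[OF L1_loc_one] by simp
  have nn: "(\<integral>\<^sup>+x. ennreal (wT x) \<partial>lebesgue)
      = set_nn_integral lebesgue (ball 0 r) (\<lambda>x. ennreal (w x powr T))"
    unfolding wT_def by (intro nn_integral_cong) (auto simp: indicator_def)
  have "wT \<in> borel_measurable lebesgue"
    unfolding wT_def using borel_measurable_integrable[OF iw] by measurable
  moreover have "(\<integral>\<^sup>+x. ennreal (norm (wT x)) \<partial>lebesgue) < \<infinity>"
    using nn growth by (simp add: wT_def le_less_trans ennreal_less_top)
  ultimately have iwT: "integrable lebesgue wT" by (rule integrableI_bounded)
  have "ennreal (\<integral>x. wT x \<partial>lebesgue) = (\<integral>\<^sup>+x. ennreal (wT x) \<partial>lebesgue)"
    using nn_integral_eq_integral[OF iwT] by (simp add: wT_def[abs_def])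
  then have "ennreal (\<integral>x. wT x \<partial>lebesgue) \<le> ennreal A" using nn growth by simp
  then have int_wT: "(\<integral>x. wT x \<partial>lebesgue) \<le> A" using A by (simp add: ennreal_le_iff)
  have "(\<integral>x. w x * indicator (ball 0 r) x \<partial>lebesgue)
      \<le> (\<integral>x. l * indicator (ball (0::'a) r) x + l powr (1 - T) * wT x \<partial>lebesgue)"
  proof (rule integral_mono_AE[OF iw])
    show "integrable lebesgue (\<lambda>x. l * indicator (ball (0::'a) r) x + l powr (1 - T) * wT x)"
      using i1 iwT by simp
    show "AE x in lebesgue. w x * indicator (ball 0 r) x \<le> l * indicator (ball 0 r) x + l powr (1 - T) * wT x"
      using w by eventually_elim (simp add: wT_def indicator_def le_add_powr_threshold[OF _ l T])
  qed
  also have "\<dots> = l * measure lebesgue (ball (0::'a) r) + l powr (1 - T) * (\<integral>x. wT x \<partial>lebesgue)"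
    using i1 iwT by simp
  also have "\<dots> \<le> l * measure lebesgue (ball (0::'a) r) + l powr (1 - T) * A"
    using int_wT by (simp add: mult_left_mono)
  finally show ?thesis .
qed

text \<open>The choice \<open>l = c R\<^sup>p / 2\<close> leaves \<open>c / 2 \<le> D R\<^sup>\<mu>\<^sup>-\<^sup>p\<^sup>T\<close>, impossible as \<open>R \<rightarrow> \<infinity>\<close>.\<close>

lemma powr_growth_contradiction:
  fixes c A p T \<mu> :: real
  assumes c: "0 < c" and A: "0 \<le> A" and \<mu>: "\<mu> < p * T"
    and bound: "\<And>R l. 1 \<le> R \<Longrightarrow> 0 < l \<Longrightarrow> c * R powr p \<le> l + l powr (1 - T) * A * R powr \<mu>"
  shows False
proof -
  define D where "D = A * (c / 2) powr (1 - T)"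
  have "c / 2 \<le> D * R powr (\<mu> - p * T)" if R: "1 \<le> R" for R
  proof -
    have "c * R powr p \<le> c / 2 * R powr p + (c / 2 * R powr p) powr (1 - T) * A * R powr \<mu>"
      using bound[OF R, of "c / 2 * R powr p"] c R by simp
    also have "(c / 2 * R powr p) powr (1 - T) * A * R powr \<mu>
        = D * (R powr (p * (1 - T)) * R powr \<mu>)"
      using c R by (subst powr_mult) (auto simp: D_def powr_powr)
    also have "\<dots> = D * R powr (\<mu> - p * T) * R powr p"
      unfolding mult.assoc powr_add[symmetric] by (simp add: algebra_simps)
    finally have "c / 2 * R powr p \<le> D * R powr (\<mu> - p * T) * R powr p" by simp
    then show ?thesis using R by (simp add: mult_le_cancel_right_pos)
  qed
  moreover have "((\<lambda>R. D * R powr (\<mu> - p * T)) \<longlongrightarrow> 0) at_top"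
    using \<mu> by (intro tendsto_mult_right_zero tendsto_neg_powr filterlim_ident) auto
  then have "\<forall>\<^sub>F R in at_top. D * R powr (\<mu> - p * T) < c / 2 \<and> 1 \<le> R"
    using c by (intro eventually_conj order_tendstoD(2)) (auto simp: eventually_ge_at_top)
  then obtain R where "D * R powr (\<mu> - p * T) < c / 2" "1 \<le> R"
    by (auto dest: eventually_happens)
  ultimately show False by force
qed

lemma weight_growth_contradiction:
  fixes w :: "'a::euclidean_space \<Rightarrow> real"
  assumes Lw: "L1_loc w" and w: "AE x in lebesgue. 0 \<le> w x"
    and T: "1 \<le> T" and \<mu>: "\<mu> < p * T" and C: "0 \<le> C" and c: "0 < c"
    and lower: "\<And>R. 0 < R \<Longrightarrow> c * measure lebesgue (ball (0::'a) (2 * R)) * R powr p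
      \<le> (\<integral>x. w x * indicator (ball 0 (2 * R)) x \<partial>lebesgue)"
    and growth: "\<And>R. 1 \<le> R \<Longrightarrow>
      set_nn_integral lebesgue (ball 0 (2 * R)) (\<lambda>x. ennreal (w x powr T)) \<le> ennreal (C * R powr \<mu>)"
  shows False
proof -
  define m where "m = measure lebesgue (ball (0::'a) 2)"
  have m: "0 < m" by (simp add: m_def content_ball_pos)
  have "c * R powr p \<le> l + l powr (1 - T) * (C / m) * R powr \<mu>" if R: "1 \<le> R" and l: "0 < l" for R l
  proof -
    define mR where "mR = measure lebesgue (ball (0::'a) (2 * R))"
    have "m \<le> mR" using R by (simp add: m_def mR_def content_ball power_mono)
    moreover have "c * mR * R powr p \<le> l * mR + l powr (1 - T) * (C * R powr \<mu>)"
      using lower[of R] integral_indicator_ball_le_powr[OF Lw w T l _ growth[OF R]] C R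
      by (simp add: mR_def)
    ultimately have "c * R powr p \<le> l + l powr (1 - T) * C * R powr \<mu> / mR"
      using m by (simp add: field_simps)
    also have "\<dots> \<le> l + l powr (1 - T) * C * R powr \<mu> / m"
      using \<open>m \<le> mR\<close> m C by (intro add_left_mono divide_left_mono) auto
    finally show ?thesis by simp
  qed
  then show False using powr_growth_contradiction[OF c _ \<mu>, of "C / m"] C m by simp
qed

lemma T_p_gt_1:
  assumes p: "2 \<le> p" and M: "0 < M" and M4: "2 < p \<Longrightarrow> M < 4 / (p - 1)\<^sup>2"
  shows "1 < T_p M p"
proof -
  have "0 < t_p M p"
  proof (cases "p = 2")
    case False
    then have "M * (p - 1)\<^sup>2 < 4" using p M4 by (simp add: field_simps)
    then have "(p - 1) / 2 < 2 / (M * (p - 1))"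
      using M p by (simp add: field_simps power2_eq_square)
    then show ?thesis using False by (simp add: t_p_def)
  qed (use M in \<open>simp add: t_p_def add_pos_nonneg\<close>)
  then show ?thesis using p by (simp add: T_p_def)
qed

lemma Linf_inverse_lower_bound:
  fixes g :: "'a::euclidean_space \<Rightarrow> real"
  assumes "Linf (\<lambda>x. 1 / g x)" "AE x in lebesgue. 0 < g x"
  obtains B where "0 < B" "AE x in lebesgue. 1 / B \<le> g x"
proof -
  obtain B0 where B0: "AE x in lebesgue. \<bar>1 / g x\<bar> \<le> B0" using assms(1) by (auto simp: Linf_def)
  have "AE x in lebesgue. 1 / max B0 1 \<le> g x"
    using B0 assms(2)
  proof eventually_elim
    case (elim x)
    then have "1 / g x \<le> max B0 1" by simp
    then have "inverse (max B0 1) \<le> inverse (1 / g x)"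
      using elim(2) by (intro le_imp_inverse_le) auto
    then show ?case by (simp add: inverse_eq_divide)
  qed
  then show ?thesis using that[of "max B0 1"] by simp
qed

theorem theorem3p6:
  fixes w g :: "'a::euclidean_space \<Rightarrow> real"
    and p M \<mu> C :: real
  assumes hp: "p \<ge> 2"
    and hw: "L1_loc w" "AE x in lebesgue. w x > 0"
    and hg: "L1_loc g" "AE x in lebesgue. g x > 0" "Linf (\<lambda>x. 1 / g x)"
    and hM2: "p = 2 \<Longrightarrow> M > 0"
    and hM: "p > 2 \<Longrightarrow> 0 < M \<and> M < 4 / (p - 1)\<^sup>2"
    and h\<mu>: "\<mu> > 0" "\<mu> < p * T_p M p"
    and hC: "C > 0"
    and hgrowth: "\<And>R. R \<ge> 1 \<Longrightarrow>
        set_nn_integral lebesgue (ball 0 (2 * R)) (\<lambda>x. ennreal (w x powr T_p M p))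
          \<le> ennreal (C * R powr \<mu>)"
  shows "\<not> (\<exists>u :: 'a \<Rightarrow> real. C1_fun u \<and> (\<forall>x. u x > 0) \<and> (\<forall>x. \<bar>u x\<bar> \<le> M)
              \<and> weak_solution p w g u \<and> stable p w g u)"
proof
  assume "\<exists>u :: 'a \<Rightarrow> real. C1_fun u \<and> (\<forall>x. u x > 0) \<and> (\<forall>x. \<bar>u x\<bar> \<le> M)
              \<and> weak_solution p w g u \<and> stable p w g u"
  then obtain u :: "'a \<Rightarrow> real" where weak: "weak_solution p w g u"
    and u: "\<And>x. 0 < u x" "\<And>x. u x \<le> M"
    by (auto dest: abs_le_D1)
  have T: "1 < T_p M p" using hp hM2 hM u[of 0] by (intro T_p_gt_1) auto
  obtain B where B: "0 < B" "AE x in lebesgue. 1 / B \<le> g x"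
    using Linf_inverse_lower_bound[OF hg(3) hg(2)] by blast
  have w: "AE x in lebesgue. 0 \<le> w x" using hw(2) by eventually_elim simp
  obtain c where c: "0 < c"
    and lower: "\<And>R. 0 < R \<Longrightarrow> c * measure lebesgue (ball (0::'a) (2 * R)) * R powr p
      \<le> (\<integral>x. w x * indicator (ball 0 (2 * R)) x \<partial>lebesgue)"
    using weak_solution_weight_lower_bound[OF weak hp hw(1) w hg(1) B(2,1) u] by blast
  show False
    using weight_growth_contradiction[OF hw(1) w less_imp_le[OF T] h\<mu>(2) less_imp_le[OF hC] c lower
        hgrowth] .
qed

end
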